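(* Let $N\ge 2$, let $K\in\mathbb{R}^{N\times N}$ be symmetric positive semi-definite, let $\lambda>0$ and $y\in\mathbb{R}^N$. Set $A:=(K+\lambda I)^{-1}$, $\alpha=\alpha(K):=Ay$, $\beta:=A\alpha$, and $\mathcal{L}_{\mathrm{tr}}(K):=\lambda^2\|\alpha(K)\|_2^2$. For $i\neq j$ let $E_{ij}:=e_ie_j^\top+e_je_i^\top$, and regard $\mathcal{L}_{\mathrm{tr}}$ as a function of the upper-triangular entries of the symmetric matrix $K$, so that a change of the entry $K_{ij}$ ($i<j$) by $t$ corresponds to $K\mapsto K+tE_{ij}$. Then for $i\neq j$: (1) $g_{ij}:=\dfrac{\partial\mathcal{L}_{\mathrm{tr}}}{\partial K_{ij}}=-2\lambda^2(\beta_i\alpha_j+\beta_j\alpha_i)$; (2) the diagonal Hessian entry $H_{ij}:=\dfrac{\partial^2\mathcal{L}_{\mathrm{tr}}}{\partial K_{ij}^2}$ decomposes as $H_{ij}=\tilde H_{ij}+R_{ij}$, where $\tilde H_{ij}:=2\lambda^2\|AE_{ij}\alpha\|_2^2\ge 0$ and $R_{ij}=4\lambda^2\bigl[A_{ij}(\beta_i\alpha_j+\beta_j\alpha_i)+A_{ii}\beta_j\alpha_j+A_{jj}\beta_i\alpha_i\bigr]$; (3) $|R_{ij}|\le 8\|y\|_2\lambda^{-1}(|\alpha_i|+|\alpha_j|)$; (4) both $\tilde H_{ij}$ and $R_{ij}$ vanish whenever $\alpha_i=\alpha_j=0$.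
   Context: $e_i$ denotes the $i$-th standard basis vector of $\mathbb{R}^N$. $\mathcal{L}_{\mathrm{tr}}$ is the training squared loss $\|y-K\alpha\|^2$ of kernel ridge regression, which equals $\lambda^2\|\alpha\|^2$. *)

theory Defs
  imports "HOL-Analysis.Analysis"
begin

definition krr_A :: "real \<Rightarrow> real^'n^'n \<Rightarrow> real^'n^'n" where
  "krr_A lam K = matrix_inv (K + lam *\<^sub>R mat 1)"

definition krr_alpha :: "real \<Rightarrow> real^'n \<Rightarrow> real^'n^'n \<Rightarrow> real^'n" where
  "krr_alpha lam y K = krr_A lam K *v y"

definition krr_beta :: "real \<Rightarrow> real^'n \<Rightarrow> real^'n^'n \<Rightarrow> real^'n" where
  "krr_beta lam y K = krr_A lam K *v krr_alpha lam y K"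

definition L_tr :: "real \<Rightarrow> real^'n \<Rightarrow> real^'n^'n \<Rightarrow> real" where
  "L_tr lam y K = lam\<^sup>2 * (norm (krr_alpha lam y K))\<^sup>2"

definition Emat :: "'n \<Rightarrow> 'n \<Rightarrow> real^'n^'n" where
  "Emat i j = (\<chi> a b. (if a = i \<and> b = j then 1 else 0) + (if a = j \<and> b = i then 1 else 0))"

definition psd_sym :: "real^'n^'n \<Rightarrow> bool" where
  "psd_sym K \<longleftrightarrow> transpose K = K \<and> (\<forall>x. 0 \<le> x \<bullet> (K *v x))"

definition H_tilde :: "real \<Rightarrow> real^'n \<Rightarrow> real^'n^'n \<Rightarrow> 'n \<Rightarrow> 'n \<Rightarrow> real" where
  "H_tilde lam y K i j = 2 * lam\<^sup>2 * (norm (krr_A lam K *v (Emat i j *v krr_alpha lam y K)))\<^sup>2"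

definition R_term :: "real \<Rightarrow> real^'n \<Rightarrow> real^'n^'n \<Rightarrow> 'n \<Rightarrow> 'n \<Rightarrow> real" where
  "R_term lam y K i j = (let A = krr_A lam K; a = krr_alpha lam y K; b = krr_beta lam y K in
     4 * lam\<^sup>2 * (A $ i $ j * (b $ i * a $ j + b $ j * a $ i)
                  + A $ i $ i * b $ j * a $ j + A $ j $ j * b $ i * a $ i))"

end

(*
  Put A(t) = (K + t E_ij + lam I)^-1. Since |x . E_ij x| <= |x|^2, the matrix K + t E_ij + lam I
  stays coercive with constant lam/2 for |t| <= lam/2, so A(t) exists there, is symmetric and has
  norm at most 2/lam. The resolvent identity A(t) - A(s) = -(t - s) A(t) E_ij A(s) then yields
  continuity of A and the product rule (A u)' = A u' - A E_ij A u. With alpha(t) = A(t) y and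
  beta(t) = A(t) alpha(t) this gives L' = -2 lam^2 beta . E_ij alpha and
  L'' = 2 lam^2 |A E_ij alpha|^2 + 4 lam^2 beta . E_ij A E_ij alpha, whose second summand is R_ij
  once E_ij is written out. The bound on R_ij follows from |A_pq| <= 1/lam and
  |beta| <= |y| / lam^2.
*)

theory Submission
  imports Defs
begin

lemma has_vector_derivative_iff_quotient:
  fixes f :: "real \<Rightarrow> 'a::real_normed_vector"
  shows "(f has_vector_derivative D) (at x within S) \<longleftrightarrow>
         ((\<lambda>t. (f t - f x) /\<^sub>R (t - x)) \<longlongrightarrow> D) (at x within S)"
proof -
  have "norm (f t - f x - (t - x) *\<^sub>R D) / norm (t - x) = norm ((f t - f x) /\<^sub>R (t - x) - D)"
    if "t \<noteq> x" for t
  proof -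
    have "f t - f x - (t - x) *\<^sub>R D = (t - x) *\<^sub>R ((f t - f x) /\<^sub>R (t - x) - D)"
      using that by (simp add: scaleR_diff_right)
    then show ?thesis using that by simp
  qed
  then have "((\<lambda>t. norm (f t - f x - (t - x) *\<^sub>R D) / norm (t - x)) \<longlongrightarrow> 0) (at x within S)
        \<longleftrightarrow> ((\<lambda>t. norm ((f t - f x) /\<^sub>R (t - x) - D)) \<longlongrightarrow> 0) (at x within S)"
    by (intro filterlim_cong) (auto simp: eventually_at_filter)
  then show ?thesis
    by (simp add: has_vector_derivative_def has_derivative_iff_norm bounded_linear_scaleR_left
        tendsto_norm_zero_iff LIM_zero_iff)
qed

lemma matrix_vector_mult_minus_right: "(A :: 'a::ring_1^'n^'m) *v (- x) = - (A *v x)"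
  by (simp add: matrix_vector_mult_def vec_eq_iff sum_negf)

lemma symmetric_matrix_inner:
  fixes M :: "real^'n^'n"
  assumes "transpose M = M"
  shows "x \<bullet> (M *v y) = (M *v x) \<bullet> y"
  by (metis assms dot_lmul_matrix transpose_matrix_vector)

lemma symmetric_matrix_inv:
  fixes M :: "'a::field^'n^'n"
  assumes "transpose M = M" and "M ** matrix_inv M = mat 1"
  shows "transpose (matrix_inv M) = matrix_inv M"
proof -
  have left: "transpose (matrix_inv M) ** M = mat 1"
    by (metis assms matrix_transpose_mul transpose_mat)
  have "transpose (matrix_inv M) = transpose (matrix_inv M) ** (M ** matrix_inv M)"
    using assms(2) by simp
  also have "\<dots> = matrix_inv M"
    by (simp add: matrix_mul_assoc left)
  finally show ?thesis .
qed

lemma transpose_add: "transpose (A + B :: 'a::semiring_1^'n^'m) = transpose A + transpose B"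
  by (simp add: transpose_def plus_vec_def)

lemma coercive_matrix_inverse:
  fixes M :: "real^'n^'n"
  assumes "0 < c" and coercive: "\<And>x. c * (norm x)\<^sup>2 \<le> x \<bullet> (M *v x)"
  shows "M ** matrix_inv M = mat 1" "matrix_inv M ** M = mat 1"
    and "norm (matrix_inv M *v x) \<le> norm x / c"
proof -
  have lower: "c * norm x \<le> norm (M *v x)" for x
  proof -
    have "c * (norm x)\<^sup>2 \<le> norm x * norm (M *v x)"
      using coercive[of x] norm_cauchy_schwarz[of x "M *v x"] by linarith
    then show ?thesis
      by (cases "x = 0") (auto simp: power2_eq_square)
  qed
  have "inj ((*v) M)"
  proof (rule injI)
    fix x z assume "M *v x = M *v z"
    then have "c * norm (x - z) \<le> 0"
      using lower[of "x - z"] by (simp add: matrix_vector_mult_diff_distrib)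
    then show "x = z" using \<open>0 < c\<close> by (simp add: mult_le_0_iff)
  qed
  then have "invertible M"
    by (simp add: invertible_left_inverse matrix_left_invertible_injective)
  then have "M ** matrix_inv M = mat 1 \<and> matrix_inv M ** M = mat 1"
    unfolding invertible_def matrix_inv_def by (rule someI_ex)
  then show inv: "M ** matrix_inv M = mat 1" "matrix_inv M ** M = mat 1" by auto
  show "norm (matrix_inv M *v x) \<le> norm x / c"
    using lower[of "matrix_inv M *v x"] \<open>0 < c\<close>
    by (simp add: matrix_vector_mul_assoc inv field_simps)
qed

lemma Emat_mult: "Emat i j *v v = v $ j *\<^sub>R axis i 1 + v $ i *\<^sub>R axis j 1"
proof -
  have "(Emat i j *v v) $ a
        = (\<Sum>b\<in>UNIV. (if b = j then (if a = i then v $ j else 0) else 0)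
                     + (if b = i then (if a = j then v $ i else 0) else 0))" for a
    unfolding matrix_vector_mult_def Emat_def vec_lambda_beta by (rule sum.cong) auto
  then have "(Emat i j *v v) $ a = (if a = i then v $ j else 0) + (if a = j then v $ i else 0)" for a
    by (simp only: sum.distrib sum.delta finite UNIV_I if_True)
  then show ?thesis
    unfolding vec_eq_iff by (simp add: axis_def)
qed

lemma inner_Emat: "u \<bullet> (Emat i j *v v) = u $ i * v $ j + u $ j * v $ i"
  by (simp add: Emat_mult inner_add_right inner_axis)

lemma transpose_Emat: "transpose (Emat i j) = Emat i j"
  unfolding transpose_def Emat_def by (simp add: add.commute conj_commute)

lemma abs_inner_Emat_le:
  fixes x :: "real^'n"
  assumes "i \<noteq> j"
  shows "\<bar>x \<bullet> (Emat i j *v x)\<bar> \<le> (norm x)\<^sup>2"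
proof -
  have "(x $ i)\<^sup>2 + (x $ j)\<^sup>2 = (\<Sum>a\<in>{i, j}. (x $ a)\<^sup>2)"
    using assms by simp
  also have "\<dots> \<le> (\<Sum>a\<in>UNIV. (x $ a)\<^sup>2)"
    by (rule sum_mono2) auto
  also have "\<dots> = (norm x)\<^sup>2"
    unfolding dot_square_norm[symmetric] inner_vec_def by (simp add: power2_eq_square)
  finally have "(x $ i)\<^sup>2 + (x $ j)\<^sup>2 \<le> (norm x)\<^sup>2" .
  moreover have "\<bar>2 * x $ i * x $ j\<bar> \<le> (x $ i)\<^sup>2 + (x $ j)\<^sup>2"
    using sum_squares_bound[of "x $ i" "x $ j"] sum_squares_bound[of "x $ i" "- x $ j"]
    by (simp only: abs_le_iff) simp
  moreover have "x \<bullet> (Emat i j *v x) = 2 * x $ i * x $ j"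
    by (simp add: inner_Emat)
  ultimately show ?thesis
    by linarith
qed

lemma Emat_mult_entry:
  fixes A :: "real^'n^'n"
  shows "(A *v (Emat i j *v v)) $ p = A $ p $ i * v $ j + A $ p $ j * v $ i"
  by (simp add: Emat_mult matrix_vector_right_distrib matrix_vector_mult_scaleR
      matrix_vector_mult_basis column_def mult.commute)

locale symmetric_perturbation =
  fixes M E :: "real^'n^'n" and c :: real
  assumes c_pos: "0 < c"
    and M_symmetric: "transpose M = M"
    and E_symmetric: "transpose E = E"
    and M_coercive: "\<And>x. c * (norm x)\<^sup>2 \<le> x \<bullet> (M *v x)"
    and E_bounded: "\<And>x. \<bar>x \<bullet> (E *v x)\<bar> \<le> (norm x)\<^sup>2"
begin

definition res :: "real \<Rightarrow> real^'n^'n" where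
  "res t = matrix_inv (M + t *\<^sub>R E)"

lemma perturbed_coercive:
  assumes "\<bar>t\<bar> \<le> c / 2"
  shows "c / 2 * (norm x)\<^sup>2 \<le> x \<bullet> ((M + t *\<^sub>R E) *v x)"
proof -
  have "\<bar>t * (x \<bullet> (E *v x))\<bar> \<le> c / 2 * (norm x)\<^sup>2"
    unfolding abs_mult using assms E_bounded c_pos by (intro mult_mono) auto
  then show ?thesis
    using M_coercive[of x]
    by (simp add: matrix_vector_mult_add_rdistrib inner_add_right
        flip: scaleR_matrix_vector_assoc)
qed

lemma res_left_inverse:
  "\<bar>t\<bar> \<le> c / 2 \<Longrightarrow> res t *v ((M + t *\<^sub>R E) *v x) = x"
  using coercive_matrix_inverse(2)[OF _ perturbed_coercive] c_pos
  by (simp add: res_def matrix_vector_mul_assoc)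

lemma res_right_inverse:
  "\<bar>t\<bar> \<le> c / 2 \<Longrightarrow> (M + t *\<^sub>R E) *v (res t *v x) = x"
  using coercive_matrix_inverse(1)[OF _ perturbed_coercive] c_pos
  by (simp add: res_def matrix_vector_mul_assoc)

lemma norm_res_le:
  "\<bar>t\<bar> \<le> c / 2 \<Longrightarrow> norm (res t *v x) \<le> 2 / c * norm x"
  using coercive_matrix_inverse(3)[OF _ perturbed_coercive] c_pos
  by (simp add: res_def mult.commute)

lemma transpose_res:
  assumes "\<bar>t\<bar> \<le> c / 2"
  shows "transpose (res t) = res t"
proof -
  have "transpose (M + t *\<^sub>R E) = M + t *\<^sub>R E"
    by (simp add: transpose_add transpose_scalar M_symmetric E_symmetric)
  then show ?thesis
    unfolding res_def
    using coercive_matrix_inverse(1)[OF _ perturbed_coercive[OF assms]] c_pos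
    by (intro symmetric_matrix_inv) auto
qed

lemma res_inner_commute:
  "\<bar>t\<bar> \<le> c / 2 \<Longrightarrow> u \<bullet> (res t *v v) = (res t *v u) \<bullet> v"
  by (rule symmetric_matrix_inner[OF transpose_res])

lemma res_diff:
  assumes "\<bar>t\<bar> \<le> c / 2" "\<bar>s\<bar> \<le> c / 2"
  shows "res t *v u - res s *v v = res t *v (u - v - (t - s) *\<^sub>R (E *v (res s *v v)))"
proof -
  have eq: "(M + t *\<^sub>R E) *v (res s *v v) = v + (t - s) *\<^sub>R (E *v (res s *v v))"
    using res_right_inverse[OF assms(2), of v]
    by (simp add: matrix_vector_mult_add_rdistrib algebra_simps flip: scaleR_matrix_vector_assoc)
  have "res t *v (u - v - (t - s) *\<^sub>R (E *v (res s *v v)))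
        = res t *v (u - (M + t *\<^sub>R E) *v (res s *v v))"
    by (simp only: eq diff_diff_eq)
  also have "\<dots> = res t *v u - res s *v v"
    by (simp add: matrix_vector_mult_diff_distrib res_left_inverse[OF assms(1)])
  finally show ?thesis ..
qed

lemma eventually_near_res_domain:
  assumes "\<bar>s\<bar> < c / 2"
  shows "eventually (\<lambda>t. \<bar>t\<bar> \<le> c / 2) (at s)"
proof -
  have "((\<lambda>t. \<bar>t\<bar>) \<longlongrightarrow> \<bar>s\<bar>) (at s)"
    by (intro tendsto_intros)
  from order_tendstoD(2)[OF this assms] show ?thesis
    by (rule eventually_mono) simp
qed

lemma tendsto_res:
  assumes "\<bar>s\<bar> < c / 2" and "(u \<longlongrightarrow> v) (at s)"
  shows "((\<lambda>t. res t *v u t) \<longlongrightarrow> res s *v v) (at s)"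
proof -
  let ?d = "\<lambda>t. u t - v - (t - s) *\<^sub>R (E *v (res s *v v))"
  have "eventually (\<lambda>t. norm (res t *v u t - res s *v v) \<le> 2 / c * norm (?d t)) (at s)"
    using eventually_near_res_domain[OF assms(1)]
  proof eventually_elim
    case (elim t)
    then show ?case
      using res_diff[of t s] norm_res_le assms(1) by simp
  qed
  moreover have "((\<lambda>t. 2 / c * norm (?d t)) \<longlongrightarrow> 0) (at s)"
    by (rule tendsto_eq_intros assms(2) refl | simp)+
  ultimately have "((\<lambda>t. res t *v u t - res s *v v) \<longlongrightarrow> 0) (at s)"
    by (rule Lim_null_comparison)
  then show ?thesis
    by (rule LIM_zero_cancel)
qed

lemma has_vector_derivative_res:
  assumes "\<bar>s\<bar> < c / 2" and "(u has_vector_derivative u') (at s)"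
  shows "((\<lambda>t. res t *v u t) has_vector_derivative res s *v (u' - E *v (res s *v u s))) (at s)"
proof -
  let ?q = "\<lambda>t. (u t - u s) /\<^sub>R (t - s) - E *v (res s *v u s)"
  have "((\<lambda>t. (u t - u s) /\<^sub>R (t - s)) \<longlongrightarrow> u') (at s)"
    using assms(2) by (simp add: has_vector_derivative_iff_quotient)
  then have "(?q \<longlongrightarrow> u' - E *v (res s *v u s)) (at s)"
    by (intro tendsto_intros)
  then have "((\<lambda>t. res t *v ?q t) \<longlongrightarrow> res s *v (u' - E *v (res s *v u s))) (at s)"
    by (rule tendsto_res[OF assms(1)])
  moreover have "eventually (\<lambda>t. res t *v ?q t = (res t *v u t - res s *v u s) /\<^sub>R (t - s)) (at s)"
    using eventually_near_res_domain[OF assms(1)] eventually_neq_at_within[of s s UNIV]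
  proof eventually_elim
    case (elim t)
    then have "?q t = (u t - u s - (t - s) *\<^sub>R (E *v (res s *v u s))) /\<^sub>R (t - s)"
      by (simp add: scaleR_diff_right)
    then show ?case
      using res_diff[of t s "u t" "u s"] assms(1) elim
      by (simp add: matrix_vector_mult_scaleR)
  qed
  ultimately show ?thesis
    by (simp add: has_vector_derivative_iff_quotient tendsto_cong)
qed

lemma has_vector_derivative_res_apply:
  assumes "\<bar>s\<bar> < c / 2"
  shows "((\<lambda>t. res t *v y) has_vector_derivative - (res s *v (E *v (res s *v y)))) (at s)"
  using has_vector_derivative_res[OF assms has_vector_derivative_const]
  by (simp add: matrix_vector_mult_minus_right)

lemma has_real_derivative_norm_res_squared:
  assumes "\<bar>s\<bar> < c / 2"
  shows "((\<lambda>t. (norm (res t *v y))\<^sup>2) has_real_derivative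
          - 2 * ((res s *v (res s *v y)) \<bullet> (E *v (res s *v y)))) (at s)"
proof -
  let ?a = "res s *v y"
  note da = has_vector_derivative_res_apply[OF assms, of y]
  have "((\<lambda>t. (res t *v y) \<bullet> (res t *v y)) has_vector_derivative
          ?a \<bullet> - (res s *v (E *v ?a)) + - (res s *v (E *v ?a)) \<bullet> ?a) (at s)"
    by (rule bounded_bilinear.has_vector_derivative[OF bounded_bilinear_inner da da])
  moreover have "?a \<bullet> - (res s *v (E *v ?a)) + - (res s *v (E *v ?a)) \<bullet> ?a
                 = - 2 * ((res s *v ?a) \<bullet> (E *v ?a))"
    using res_inner_commute[of s ?a "E *v ?a"] assms by (simp add: inner_commute)
  ultimately show ?thesis
    by (simp add: has_real_derivative_iff_has_vector_derivative dot_square_norm)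
qed

lemma has_real_derivative_inner_res:
  fixes y :: "real^'n"
  assumes "\<bar>s\<bar> < c / 2"
  defines "a \<equiv> res s *v y" and "b \<equiv> res s *v (res s *v y)"
  shows "((\<lambda>t. (res t *v (res t *v y)) \<bullet> (E *v (res t *v y))) has_real_derivative
          - ((norm (res s *v (E *v a)))\<^sup>2 + 2 * (b \<bullet> (E *v (res s *v (E *v a)))))) (at s)"
proof -
  let ?w = "E *v a"
  have da: "((\<lambda>t. res t *v y) has_vector_derivative - (res s *v ?w)) (at s)"
    unfolding a_def by (rule has_vector_derivative_res_apply[OF assms(1)])
  have db: "((\<lambda>t. res t *v (res t *v y)) has_vector_derivative
               - (res s *v (res s *v ?w)) - res s *v (E *v b)) (at s)"
    using has_vector_derivative_res[OF assms(1) da]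
    by (simp add: a_def b_def matrix_vector_mult_diff_distrib matrix_vector_mult_minus_right)
  have dEa: "((\<lambda>t. E *v (res t *v y)) has_vector_derivative - (E *v (res s *v ?w))) (at s)"
    using bounded_linear.has_vector_derivative[OF matrix_vector_mul_bounded_linear da]
    by (simp add: matrix_vector_mult_minus_right)
  have "((\<lambda>t. (res t *v (res t *v y)) \<bullet> (E *v (res t *v y))) has_vector_derivative
          b \<bullet> - (E *v (res s *v ?w)) + (- (res s *v (res s *v ?w)) - res s *v (E *v b)) \<bullet> ?w) (at s)"
    using bounded_bilinear.has_vector_derivative[OF bounded_bilinear_inner db dEa]
    by (simp add: a_def b_def)
  moreover have "(res s *v (res s *v ?w)) \<bullet> ?w = (norm (res s *v ?w))\<^sup>2"
    using res_inner_commute[of s ?w "res s *v ?w"] assms(1)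
    by (simp add: inner_commute dot_square_norm)
  moreover have "(res s *v (E *v b)) \<bullet> ?w = b \<bullet> (E *v (res s *v ?w))"
    using res_inner_commute[of s ?w "E *v b"] assms(1)
      symmetric_matrix_inner[OF E_symmetric, of b "res s *v ?w"]
    by (simp add: inner_commute)
  ultimately show ?thesis
    by (simp add: has_real_derivative_iff_has_vector_derivative inner_diff_left algebra_simps)
qed

end

lemma R_term_eq_inner:
  assumes "transpose (krr_A lam K) = krr_A lam K"
  shows "R_term lam y K i j = 4 * lam\<^sup>2 *
           (krr_beta lam y K \<bullet> (Emat i j *v (krr_A lam K *v (Emat i j *v krr_alpha lam y K))))"
proof -
  have "krr_A lam K $ j $ i = krr_A lam K $ i $ j"
    using assms by (metis transpose_def vec_lambda_beta)
  then show ?thesis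
    by (simp add: R_term_def Let_def inner_Emat Emat_mult_entry algebra_simps)
qed

lemma H_tilde_R_term_vanish:
  assumes "krr_alpha lam y K $ i = 0" "krr_alpha lam y K $ j = 0"
  shows "H_tilde lam y K i j = 0 \<and> R_term lam y K i j = 0"
  using assms by (simp add: H_tilde_def R_term_def Let_def Emat_mult)

locale krr_entry_perturbation =
  fixes K :: "real^'n^'n" and lam :: real and i j :: 'n
  assumes K_psd: "psd_sym K" and lam_pos: "0 < lam" and ij: "i \<noteq> j"

sublocale krr_entry_perturbation \<subseteq> symmetric_perturbation "K + lam *\<^sub>R mat 1" "Emat i j" lam
proof
  show "transpose (K + lam *\<^sub>R mat 1) = K + lam *\<^sub>R mat 1"
    using K_psd by (simp add: psd_sym_def transpose_add transpose_scalar)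
  show "lam * (norm x)\<^sup>2 \<le> x \<bullet> ((K + lam *\<^sub>R mat 1) *v x)" for x
    using K_psd
    by (simp add: psd_sym_def matrix_vector_mult_add_rdistrib inner_add_right dot_square_norm
        flip: scaleR_matrix_vector_assoc)
qed (use lam_pos ij in \<open>simp_all add: transpose_Emat abs_inner_Emat_le\<close>)

context krr_entry_perturbation
begin

lemma krr_A_perturbed: "krr_A lam (K + t *\<^sub>R Emat i j) = res t"
  by (simp add: krr_A_def res_def ac_simps)

lemma krr_A_eq: "krr_A lam K = res 0"
  using krr_A_perturbed[of 0] by simp

lemma L_tr_perturbed: "L_tr lam y (K + t *\<^sub>R Emat i j) = lam\<^sup>2 * (norm (res t *v y))\<^sup>2"
  by (simp add: L_tr_def krr_alpha_def krr_A_perturbed)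

lemma L_tr_has_real_derivative:
  assumes "\<bar>s\<bar> < lam / 2"
  shows "((\<lambda>t. L_tr lam y (K + t *\<^sub>R Emat i j)) has_real_derivative
          - 2 * lam\<^sup>2 * ((res s *v (res s *v y)) \<bullet> (Emat i j *v (res s *v y)))) (at s)"
  unfolding L_tr_perturbed
  using DERIV_cmult[OF has_real_derivative_norm_res_squared[OF assms], of "lam\<^sup>2"]
  by (simp add: algebra_simps)

lemma deriv_L_tr_has_real_derivative:
  "(deriv (\<lambda>t. L_tr lam y (K + t *\<^sub>R Emat i j)) has_real_derivative
     H_tilde lam y K i j + R_term lam y K i j) (at 0)"
proof (rule has_field_derivative_transform_within_open)
  show "open (ball (0::real) (lam / 2))" "(0::real) \<in> ball 0 (lam / 2)"
    using lam_pos by auto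
  show "- 2 * lam\<^sup>2 * ((res s *v (res s *v y)) \<bullet> (Emat i j *v (res s *v y)))
        = deriv (\<lambda>t. L_tr lam y (K + t *\<^sub>R Emat i j)) s" if "s \<in> ball 0 (lam / 2)" for s
    using that by (intro DERIV_imp_deriv[symmetric] L_tr_has_real_derivative) auto
  have "H_tilde lam y K i j + R_term lam y K i j
        = - 2 * lam\<^sup>2 * - ((norm (res 0 *v (Emat i j *v (res 0 *v y))))\<^sup>2
            + 2 * ((res 0 *v (res 0 *v y)) \<bullet> (Emat i j *v (res 0 *v (Emat i j *v (res 0 *v y))))))"
    using transpose_res[of 0] lam_pos
    by (simp add: R_term_eq_inner H_tilde_def krr_beta_def krr_alpha_def krr_A_eq algebra_simps)
  then show "((\<lambda>s. - 2 * lam\<^sup>2 * ((res s *v (res s *v y)) \<bullet> (Emat i j *v (res s *v y))))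
              has_real_derivative H_tilde lam y K i j + R_term lam y K i j) (at 0)"
    using DERIV_cmult[OF has_real_derivative_inner_res[where s = 0 and y = y], of "- 2 * lam\<^sup>2"]
      lam_pos
    by simp
qed

lemma abs_R_term_le:
  "\<bar>R_term lam y K i j\<bar> \<le> 8 * norm y / lam * (\<bar>krr_alpha lam y K $ i\<bar> + \<bar>krr_alpha lam y K $ j\<bar>)"
proof -
  define A a b where "A = krr_A lam K" and "a = krr_alpha lam y K" and "b = krr_beta lam y K"
  define C where "C = 1 / lam * (norm y / lam\<^sup>2)"
  have A_bound: "norm (A *v x) \<le> norm x / lam" for x
    using coercive_matrix_inverse(3)[OF lam_pos M_coercive] by (simp add: A_def krr_A_def)
  have A_entry: "\<bar>A $ p $ q\<bar> \<le> 1 / lam" for p q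
    using component_le_norm_cart[of "A *v axis q 1" p] A_bound[of "axis q 1"]
    by (simp add: matrix_vector_mult_basis column_def)
  have "norm b \<le> norm a / lam"
    using A_bound[of a] by (simp add: a_def b_def krr_beta_def A_def)
  also have "\<dots> \<le> norm y / lam / lam"
    using divide_right_mono[OF A_bound[of y], of lam] lam_pos
    by (simp add: a_def krr_alpha_def A_def)
  finally have b_norm: "norm b \<le> norm y / lam / lam" .
  have b_entry: "\<bar>b $ k\<bar> \<le> norm y / lam\<^sup>2" for k
    using component_le_norm_cart[of b k] b_norm by (simp add: power2_eq_square)
  have summand_bound: "\<bar>A $ p $ q * b $ k * x\<bar> \<le> C * \<bar>x\<bar>" for p q k x
    unfolding C_def abs_mult
    by (intro mult_right_mono mult_mono A_entry b_entry) (use lam_pos in auto)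
  have "\<bar>R_term lam y K i j\<bar> = \<bar>4 * lam\<^sup>2 *
          (A $ i $ j * b $ i * a $ j + A $ i $ j * b $ j * a $ i
           + A $ i $ i * b $ j * a $ j + A $ j $ j * b $ i * a $ i)\<bar>"
    by (simp add: R_term_def Let_def A_def a_def b_def algebra_simps)
  also have "\<dots> = 4 * lam\<^sup>2 *
          \<bar>A $ i $ j * b $ i * a $ j + A $ i $ j * b $ j * a $ i
           + A $ i $ i * b $ j * a $ j + A $ j $ j * b $ i * a $ i\<bar>"
    by (simp add: abs_mult)
  also have "\<dots> \<le> 4 * lam\<^sup>2 * (2 * C * (\<bar>a $ i\<bar> + \<bar>a $ j\<bar>))"
  proof (rule mult_left_mono)
    show "\<bar>A $ i $ j * b $ i * a $ j + A $ i $ j * b $ j * a $ i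
           + A $ i $ i * b $ j * a $ j + A $ j $ j * b $ i * a $ i\<bar>
          \<le> 2 * C * (\<bar>a $ i\<bar> + \<bar>a $ j\<bar>)"
      using summand_bound[of i j i "a $ j"] summand_bound[of i j j "a $ i"]
        summand_bound[of i i j "a $ j"] summand_bound[of j j i "a $ i"]
      by (simp add: algebra_simps) arith
  qed simp
  also have "\<dots> = 8 * norm y / lam * (\<bar>a $ i\<bar> + \<bar>a $ j\<bar>)"
    using lam_pos by (simp add: C_def field_simps power2_eq_square)
  finally show ?thesis
    by (simp add: a_def)
qed

end

theorem lemma1:
  fixes K :: "real^'n^'n" and y :: "real^'n" and lam :: real and i j :: 'n
  assumes "CARD('n) \<ge> 2"
    and "psd_sym K"
    and "lam > 0"
    and "i \<noteq> j"
  shows "((\<lambda>t. L_tr lam y (K + t *\<^sub>R Emat i j)) has_real_derivative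
            (- 2 * lam\<^sup>2 * (krr_beta lam y K $ i * krr_alpha lam y K $ j
                              + krr_beta lam y K $ j * krr_alpha lam y K $ i))) (at 0)
       \<and> (deriv (\<lambda>t. L_tr lam y (K + t *\<^sub>R Emat i j)) has_real_derivative
            (H_tilde lam y K i j + R_term lam y K i j)) (at 0)
       \<and> H_tilde lam y K i j \<ge> 0
       \<and> \<bar>R_term lam y K i j\<bar>
           \<le> 8 * norm y / lam * (\<bar>krr_alpha lam y K $ i\<bar> + \<bar>krr_alpha lam y K $ j\<bar>)
       \<and> (krr_alpha lam y K $ i = 0 \<and> krr_alpha lam y K $ j = 0 \<longrightarrow>
            H_tilde lam y K i j = 0 \<and> R_term lam y K i j = 0)"
proof -
  interpret krr_entry_perturbation K lam i j
    using assms(2-4) by unfold_locales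
  have "((\<lambda>t. L_tr lam y (K + t *\<^sub>R Emat i j)) has_real_derivative
          - 2 * lam\<^sup>2 * (krr_beta lam y K \<bullet> (Emat i j *v krr_alpha lam y K))) (at 0)"
    using L_tr_has_real_derivative[of 0] assms(3)
    by (simp add: krr_beta_def krr_alpha_def krr_A_eq)
  moreover have "0 \<le> H_tilde lam y K i j"
    by (simp add: H_tilde_def)
  ultimately show ?thesis
    using deriv_L_tr_has_real_derivative abs_R_term_le H_tilde_R_term_vanish[of lam y K i j]
    by (simp add: inner_Emat)
qed

end
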